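(* Let $\Gamma=G_5$ be the graph with two vertices $V_\alpha,V_\beta$ joined by exactly four edges (no loops), with degrees $d_\alpha,d_\beta\in\mathbb{Z}$. The family $\mathcal{F}(G_5,(d_\alpha,d_\beta))$ is jumping if and only if $0\le d_\alpha\le 2$ and $0\le d_\beta\le 2$.
   Context: Let $\Gamma$ be a connected graph (loops and multiple edges allowed) with vertices $V_1,\dots,V_n$ and integers $d_1,\dots,d_n$. A nodal curve with dual graph $\Gamma$ and rational components is a curve $C$ obtained from the disjoint union of copies $\mathbb{P}^1_{V_i}$ of $\mathbb{P}^1$ by choosing, for each edge of $\Gamma$, a point on each of its endpoint copies (all chosen points distinct) and identifying these two points to a node. A line bundle on $C$ is equivalent to line bundles on each $\mathbb{P}^1_{V_i}$ together with, at each node, an identification of the two fibres (descent data, a scalar in $\mathbb{C}^*$ after trivialising); global sections are tuples of sections on the $\mathbb{P}^1$'s compatible with these identifications. The family $\mathcal{F}(\Gamma,(d_i))$ consists of all pairs $(C,L)$ with $C$ such a curve (any choice of node positions) and $L$ a line bundle on $C$ whose pullback to $\mathbb{P}^1_{V_i}$ has degree $d_i$ for all $i$ (any descent data). $\Gamma$ with degrees $(d_i)$ is called jumping if $h^0(C,L)$ is not constant on $\mathcal{F}(\Gamma,(d_i))$, and non-jumping otherwise. *)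

theory Defs
  imports Complex_Main "HOL-Computational_Algebra.Polynomial" "HOL-Library.Product_Plus"
begin

text \<open>Global sections of O(d) on P^1: homogeneous polynomials of degree d in (x,y),
  encoded by their dehomogenisation: p = sum c_i t^i encodes sum c_i x^i y^(d-i).
  For d < 0 the space is zero.\<close>
definition Hom :: "int \<Rightarrow> complex poly set" where
  "Hom d = {p. if d < 0 then p = 0 else degree p \<le> nat d}"

text \<open>Value of the section p of O(d) at the point with homogeneous coordinates (x,y)
  (in the trivialisation of the fibre given by this representative).\<close>
definition heval :: "int \<Rightarrow> complex poly \<Rightarrow> complex \<times> complex \<Rightarrow> complex" where
  "heval d p v = (\<Sum>i\<le>nat d. coeff p i * fst v ^ i * snd v ^ (nat d - i))"

definition four_points :: "(nat \<Rightarrow> complex \<times> complex) \<Rightarrow> bool" where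
  "four_points P \<longleftrightarrow> (\<forall>e<4. P e \<noteq> (0, 0)) \<and>
     (\<forall>e<4. \<forall>e'<4. e \<noteq> e' \<longrightarrow> fst (P e) * snd (P e') \<noteq> snd (P e) * fst (P e'))"

text \<open>Curve with dual graph G5: P^1_alpha and P^1_beta glued along four nodes, the e-th node
  identifying P e on P^1_alpha with Q e on P^1_beta. The line bundle has degrees (da, db)
  and descent data lam e (nonzero) at the e-th node.\<close>
definition G5_sections ::
  "int \<Rightarrow> int \<Rightarrow> (nat \<Rightarrow> complex \<times> complex) \<Rightarrow> (nat \<Rightarrow> complex \<times> complex)
     \<Rightarrow> (nat \<Rightarrow> complex) \<Rightarrow> (complex poly \<times> complex poly) set" where
  "G5_sections da db P Q lam =
     {(f, g). f \<in> Hom da \<and> g \<in> Hom db \<and>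
        (\<forall>e<4. heval da f (P e) = lam e * heval db g (Q e))}"

definition pair_scale :: "complex \<Rightarrow> complex poly \<times> complex poly \<Rightarrow> complex poly \<times> complex poly" where
  "pair_scale c fg = (smult c (fst fg), smult c (snd fg))"

definition h0_G5 ::
  "int \<Rightarrow> int \<Rightarrow> (nat \<Rightarrow> complex \<times> complex) \<Rightarrow> (nat \<Rightarrow> complex \<times> complex)
     \<Rightarrow> (nat \<Rightarrow> complex) \<Rightarrow> nat" where
  "h0_G5 da db P Q lam = vector_space.dim pair_scale (G5_sections da db P Q lam)"

definition G5_member ::
  "(nat \<Rightarrow> complex \<times> complex) \<Rightarrow> (nat \<Rightarrow> complex \<times> complex) \<Rightarrow> (nat \<Rightarrow> complex) \<Rightarrow> bool" where
  "G5_member P Q lam \<longleftrightarrow> four_points P \<and> four_points Q \<and> (\<forall>e<4. lam e \<noteq> 0)"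

definition G5_jumping :: "int \<Rightarrow> int \<Rightarrow> bool" where
  "G5_jumping da db \<longleftrightarrow>
     (\<exists>P Q lam P' Q' lam'. G5_member P Q lam \<and> G5_member P' Q' lam' \<and>
        h0_G5 da db P Q lam \<noteq> h0_G5 da db P' Q' lam')"

end

theory Submission
  imports Defs
begin

text \<open>The sections of L form the common kernel, in
  V = H^0(O(d_\<alpha>)) \<oplus> H^0(O(d_\<beta>)), of the four node conditions
  f(P_e) = \<lambda>_e g(Q_e). If d_\<alpha> \<ge> 3, for every node e some section of
  O(d_\<alpha>) vanishes at the other three nodes but not at P_e (a product of linear forms),
  so the four conditions are independent and h^0 = dim V - 4 on the whole family; likewise
  if d_\<beta> \<ge> 3. If both degrees are at most 2 and one is negative, the other component
  carries a section of degree at most 2 vanishing at four points, so h^0 = 0. If both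
  degrees lie in [0, 2], place both sets of nodes at 0, 1, 2, 3: the first three conditions
  force f = g, so trivial descent data give {(f, f)}, whereas doubling \<lambda>_3 adds the
  condition f(3) = 0 and lowers h^0 by one.\<close>

lemma Hom_iff: "0 \<le> d \<Longrightarrow> f \<in> Hom d \<longleftrightarrow> degree f \<le> nat d"
  by (simp add: Hom_def)

lemma Hom_neg_iff: "d < 0 \<Longrightarrow> f \<in> Hom d \<longleftrightarrow> f = 0"
  by (simp add: Hom_def)

lemma degree_le_if_Hom: "f \<in> Hom d \<Longrightarrow> degree f \<le> nat d"
  by (auto simp: Hom_def split: if_splits)

lemma zero_in_Hom [simp]: "0 \<in> Hom d"
  by (simp add: Hom_def)

lemma Hom_add: "f \<in> Hom d \<Longrightarrow> g \<in> Hom d \<Longrightarrow> f + g \<in> Hom d"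
  by (auto simp: Hom_def split: if_splits intro: order_trans[OF degree_add_le])

lemma Hom_smult: "f \<in> Hom d \<Longrightarrow> smult c f \<in> Hom d"
  by (auto simp: Hom_def split: if_splits intro: order_trans[OF degree_smult_le])

lemma heval_zero [simp]: "heval d 0 v = 0"
  by (simp add: heval_def)

lemma heval_add: "heval d (p + q) v = heval d p v + heval d q v"
  by (simp add: heval_def algebra_simps sum.distrib)

lemma heval_smult: "heval d (smult c p) v = c * heval d p v"
  by (simp add: heval_def algebra_simps sum_distrib_left)

lemma heval_eq_poly:
  assumes "snd v \<noteq> 0" "degree p \<le> nat d"
  shows "heval d p v = snd v ^ nat d * poly p (fst v / snd v)"
proof -
  have "poly p (fst v / snd v) = (\<Sum>i\<le>nat d. coeff p i * (fst v / snd v) ^ i)"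
    unfolding poly_altdef
    by (rule sum.mono_neutral_left) (use assms in \<open>auto simp: coeff_eq_0\<close>)
  hence "snd v ^ nat d * poly p (fst v / snd v) =
      (\<Sum>i\<le>nat d. coeff p i * (snd v ^ nat d * (fst v / snd v) ^ i))"
    by (simp add: sum_distrib_left algebra_simps)
  also have "\<dots> = (\<Sum>i\<le>nat d. coeff p i * fst v ^ i * snd v ^ (nat d - i))"
  proof (rule sum.cong)
    fix i assume "i \<in> {..nat d}"
    hence "snd v ^ nat d = snd v ^ i * snd v ^ (nat d - i)"
      by (simp add: power_add[symmetric])
    thus "coeff p i * (snd v ^ nat d * (fst v / snd v) ^ i) =
        coeff p i * fst v ^ i * snd v ^ (nat d - i)"
      using assms(1) by (simp add: power_divide field_simps)
  qed simp
  finally show ?thesis by (simp add: heval_def)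
qed

lemma heval_snd_eq_0:
  assumes "snd v = 0"
  shows "heval d p v = coeff p (nat d) * fst v ^ nat d"
proof -
  have "heval d p v = (\<Sum>i\<le>nat d. if i = nat d then coeff p i * fst v ^ i else 0)"
    unfolding heval_def by (rule sum.cong) (use assms in auto)
  thus ?thesis by simp
qed

lemma coeff_mult_degree_bound:
  fixes p q :: "'a::comm_semiring_0 poly"
  assumes "degree p \<le> a" "degree q \<le> b"
  shows "coeff (p * q) (a + b) = coeff p a * coeff q b"
proof (cases "degree p = a \<and> degree q = b")
  case True
  thus ?thesis using coeff_mult_degree_sum[of p q] by simp
next
  case False
  hence "degree p < a \<or> degree q < b" using assms by auto
  thus ?thesis using assms degree_mult_le[of p q] by (auto simp: coeff_eq_0)
qed

lemma heval_mult:
  assumes "degree p \<le> a" "degree q \<le> b"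
  shows "heval (int (a + b)) (p * q) v = heval (int a) p v * heval (int b) q v"
proof (cases "snd v = 0")
  case True
  thus ?thesis using coeff_mult_degree_bound[OF assms]
    by (simp add: heval_snd_eq_0 power_add nat_int_add)
next
  case False
  have "degree (p * q) \<le> a + b" using degree_mult_le[of p q] assms by simp
  thus ?thesis using False assms by (simp add: heval_eq_poly power_add nat_int_add)
qed

lemma degree_power_le_if_linear: "degree L \<le> 1 \<Longrightarrow> degree (L ^ n) \<le> n"
  using degree_power_le[of L n] by (metis dual_order.trans mult.commute mult_le_mono2 mult_1_right)

lemma heval_power:
  assumes "degree L \<le> 1"
  shows "heval (int n) (L ^ n) v = heval 1 L v ^ n"
proof (induction n)
  case 0
  thus ?case by (simp add: heval_def)
next
  case (Suc n)
  have "heval (int (1 + n)) (L * L ^ n) v = heval (int 1) L v * heval (int n) (L ^ n) v"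
    by (rule heval_mult[OF assms degree_power_le_if_linear[OF assms]])
  thus ?case using Suc by simp
qed

definition vanishing_form :: "complex \<times> complex \<Rightarrow> complex poly" where
  "vanishing_form p = [:- fst p, snd p:]"

lemma degree_vanishing_form: "degree (vanishing_form p) \<le> 1"
  by (simp add: vanishing_form_def)

lemma heval_vanishing_form: "heval 1 (vanishing_form p) v = snd p * fst v - fst p * snd v"
  by (simp add: heval_def vanishing_form_def)

lemma four_points_cross_neq:
  "four_points P \<Longrightarrow> i < 4 \<Longrightarrow> j < 4 \<Longrightarrow> i \<noteq> j \<Longrightarrow>
     fst (P i) * snd (P j) \<noteq> snd (P i) * fst (P j)"
  by (simp add: four_points_def)

lemma heval_vanishing_form_eq_0_iff:
  assumes "four_points P" "i < 4" "j < 4"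
  shows "heval 1 (vanishing_form (P j)) (P i) = 0 \<longleftrightarrow> i = j"
  using four_points_cross_neq[OF assms(1,3,2)]
  by (cases "i = j") (auto simp: heval_vanishing_form algebra_simps)

lemma Hom_eq_0_if_vanishes_at_four_points:
  assumes Q: "four_points Q" and g: "g \<in> Hom d" "d \<le> 2"
    and vanish: "\<forall>e<4. heval d g (Q e) = 0"
  shows "g = 0"
proof (cases "d < 0")
  case True
  thus ?thesis using g by (simp add: Hom_neg_iff)
next
  case False
  define Z where "Z = {e. e < 4 \<and> snd (Q e) = 0}"
  define S where "S = {..<4} - Z"
  define r where "r e = fst (Q e) / snd (Q e)" for e
  have Z: "Z \<subseteq> {..<4}" by (auto simp: Z_def)
  have "card Z \<le> Suc 0"
  proof (subst card_le_Suc0_iff_eq)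
    show "finite Z" using finite_subset[OF Z] by simp
    show "\<forall>a\<in>Z. \<forall>b\<in>Z. a = b"
      unfolding Z_def
      by (metis (mono_tags) four_points_cross_neq[OF Q] mem_Collect_eq mult_zero_left mult_zero_right)
  qed
  hence "3 \<le> card S"
    using Z by (simp add: S_def card_Diff_subset finite_subset)
  moreover have "inj_on r S"
  proof (rule inj_onI)
    fix a b assume "a \<in> S" "b \<in> S" "r a = r b"
    hence "a < 4" "b < 4" "fst (Q a) * snd (Q b) = snd (Q a) * fst (Q b)"
      by (auto simp: S_def Z_def r_def divide_eq_eq)
    thus "a = b" using four_points_cross_neq[OF Q] by blast
  qed
  moreover have "degree g \<le> 2" using degree_le_if_Hom[OF g(1)] g(2) by linarith
  ultimately have card: "degree g < card (r ` S)" by (simp add: card_image)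
  have "poly g (r e) = poly 0 (r e)" if "e \<in> S" for e
  proof -
    have "snd (Q e) \<noteq> 0" "e < 4" using that by (auto simp: S_def Z_def)
    thus ?thesis
      using vanish heval_eq_poly[OF \<open>snd (Q e) \<noteq> 0\<close> degree_le_if_Hom[OF g(1)]]
      by (simp add: r_def)
  qed
  thus "g = 0" by (intro poly_eqI_degree[OF _ card]) (use card in auto)
qed

lemma degree_prod_le_if_linear:
  assumes "finite A" "\<And>j. j \<in> A \<Longrightarrow> degree (L j) \<le> 1"
  shows "degree (\<Prod>j\<in>A. L j) \<le> card A"
  using degree_prod_sum_le[OF assms(1), of L] sum_bounded_above[of A "degree \<circ> L" 1] assms(2)
  by simp

lemma heval_prod:
  assumes "finite A" "\<And>j. j \<in> A \<Longrightarrow> degree (L j) \<le> 1"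
  shows "heval (int (card A)) (\<Prod>j\<in>A. L j) v = (\<Prod>j\<in>A. heval 1 (L j) v)"
  using assms
proof (induction A rule: finite_induct)
  case empty
  thus ?case by (simp add: heval_def)
next
  case (insert x A)
  have "heval (int (1 + card A)) (L x * (\<Prod>j\<in>A. L j)) v =
      heval (int 1) (L x) v * heval (int (card A)) (\<Prod>j\<in>A. L j) v"
    using insert.prems insert.hyps(1) by (intro heval_mult degree_prod_le_if_linear) auto
  thus ?case using insert by simp
qed

text \<open>The power factor vanishes only at a node other than P_e, so peak_section P e n, a section of
  O(n + 3), vanishes at the nodes P_i exactly for i \<noteq> e.\<close>
definition peak_section :: "(nat \<Rightarrow> complex \<times> complex) \<Rightarrow> nat \<Rightarrow> nat \<Rightarrow> complex poly" where
  "peak_section P e n = vanishing_form (P (if e = 0 then 1 else 0)) ^ n *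
     (\<Prod>j\<in>{..<4} - {e}. vanishing_form (P j))"

lemma card_lessThan_4_Diff_singleton: "e < 4 \<Longrightarrow> card ({..<4::nat} - {e}) = 3"
  by (simp add: card_Diff_singleton)

lemma peak_section_degree_and_heval:
  "degree (peak_section P e n) \<le> n + card ({..<4} - {e}) \<and>
   heval (int (n + card ({..<4} - {e}))) (peak_section P e n) v =
     heval 1 (vanishing_form (P (if e = 0 then 1 else 0))) v ^ n *
     (\<Prod>j\<in>{..<4} - {e}. heval 1 (vanishing_form (P j)) v)"
proof -
  define L where "L = vanishing_form (P (if e = 0 then 1 else 0))"
  define A where "A = {..<4::nat} - {e}"
  have L: "degree L \<le> 1" unfolding L_def by (rule degree_vanishing_form)
  have prod: "degree (\<Prod>j\<in>A. vanishing_form (P j)) \<le> card A"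
    by (rule degree_prod_le_if_linear) (simp_all add: A_def vanishing_form_def)
  have "degree (L ^ n * (\<Prod>j\<in>A. vanishing_form (P j))) \<le> n + card A"
    by (rule order_trans[OF degree_mult_le add_mono[OF degree_power_le_if_linear[OF L] prod]])
  moreover have "heval (int (n + card A)) (L ^ n * (\<Prod>j\<in>A. vanishing_form (P j))) v =
      heval 1 L v ^ n * (\<Prod>j\<in>A. heval 1 (vanishing_form (P j)) v)"
    using heval_mult[OF degree_power_le_if_linear[OF L] prod] heval_power[OF L]
      heval_prod[OF _ degree_vanishing_form, of A] by (simp add: A_def)
  ultimately show ?thesis by (simp only: peak_section_def L_def A_def)
qed

lemma degree_peak_section: "e < 4 \<Longrightarrow> degree (peak_section P e n) \<le> n + 3"
  using peak_section_degree_and_heval[of P e n] by (simp add: card_lessThan_4_Diff_singleton)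

lemma heval_peak_section_eq_0_iff:
  assumes P: "four_points P" and "e < 4" "i < 4"
  shows "heval (int (n + 3)) (peak_section P e n) (P i) = 0 \<longleftrightarrow> i \<noteq> e"
  using peak_section_degree_and_heval[of P e n "P i"] assms
  by (auto simp: card_lessThan_4_Diff_singleton heval_vanishing_form_eq_0_iff[OF P])

lemma Hom_dual_sections:
  assumes P: "four_points P" and "3 \<le> d"
  obtains s where "\<And>j. j < 4 \<Longrightarrow> s j \<in> Hom d"
    "\<And>i j. i < 4 \<Longrightarrow> j < 4 \<Longrightarrow> heval d (s j) (P i) = (if i = j then 1 else 0)"
proof
  define n where "n = nat d - 3"
  have d: "d = int (n + 3)" and "nat d = n + 3" using assms(2) by (simp_all add: n_def)
  have vanish: "heval d (peak_section P j n) (P i) = 0 \<longleftrightarrow> i \<noteq> j" if "i < 4" "j < 4" for i j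
    using heval_peak_section_eq_0_iff[OF P that(2,1)] d by simp
  define s where "s j = smult (1 / heval d (peak_section P j n) (P j)) (peak_section P j n)" for j
  show "s j \<in> Hom d" if "j < 4" for j
    unfolding s_def
    by (rule Hom_smult) (use assms(2) in \<open>simp add: Hom_iff \<open>nat d = n + 3\<close> degree_peak_section[OF that]\<close>)
  show "heval d (s j) (P i) = (if i = j then 1 else 0)" if "i < 4" "j < 4" for i j
    using vanish[OF that] vanish[OF that(2,2)] by (simp add: s_def heval_smult)
qed

context vector_space
begin

lemma dim_kernel_add_one:
  assumes U: "subspace U" and F: "finite F" "U \<subseteq> span F"
    and add: "\<And>x y. x \<in> U \<Longrightarrow> y \<in> U \<Longrightarrow> \<phi> (x + y) = \<phi> x + \<phi> y"
    and scale: "\<And>c x. x \<in> U \<Longrightarrow> \<phi> (scale c x) = c * \<phi> x"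
    and s: "s \<in> U" "\<phi> s = 1"
  shows "dim {u \<in> U. \<phi> u = 0} + 1 = dim U"
proof -
  define K where "K = {u \<in> U. \<phi> u = 0}"
  have "\<phi> 0 = 0" using scale[OF s(1), of 0] by simp
  hence "subspace K"
    using U add scale by (auto simp: K_def subspace_def)
  obtain B where B: "B \<subseteq> K" "independent B" "K \<subseteq> span B" "card B = dim K"
    using basis_exists[of K] by blast
  have "finite B"
    using independent_span_bound[OF F(1) B(2)] B(1) F(2) by (auto simp: K_def)
  have span_B: "span B = K" using span_subspace[OF B(1,3) \<open>subspace K\<close>] .
  hence "s \<notin> span B" using s by (simp add: K_def)
  hence "independent (insert s B)" using independent_insertI[OF _ B(2)] by blast
  moreover have "insert s B \<subseteq> U" using B(1) s by (auto simp: K_def)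
  moreover have "U \<subseteq> span (insert s B)"
  proof
    fix u assume u: "u \<in> U"
    have "u + scale (- \<phi> u) s \<in> U" by (rule subspace_add[OF U u subspace_scale[OF U s(1)]])
    moreover have "\<phi> (u + scale (- \<phi> u) s) = 0"
      using add[OF u subspace_scale[OF U s(1)]] scale[OF s(1)] s(2) by (simp del: scale_minus_left)
    ultimately have "u + scale (- \<phi> u) s \<in> span (insert s B)"
      using span_B span_mono[of B "insert s B"] by (auto simp: K_def)
    moreover have "scale (\<phi> u) s \<in> span (insert s B)" by (intro span_scale span_base) simp
    ultimately have "u + scale (- \<phi> u) s + scale (\<phi> u) s \<in> span (insert s B)"
      by (rule span_add)
    thus "u \<in> span (insert s B)" by (simp add: scale_minus_left)
  qed
  ultimately have "card (insert s B) = dim U" by (intro basis_card_eq_dim)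
  moreover have "s \<notin> B" using \<open>s \<notin> span B\<close> span_base by blast
  ultimately show ?thesis using \<open>finite B\<close> B(4) by (simp add: K_def)
qed

lemma dim_common_kernel_add:
  assumes V: "subspace V" "finite F" "V \<subseteq> span F"
    and add: "\<And>i x y. i < k \<Longrightarrow> x \<in> V \<Longrightarrow> y \<in> V \<Longrightarrow> \<phi> i (x + y) = \<phi> i x + \<phi> i y"
    and scale: "\<And>i c x. i < k \<Longrightarrow> x \<in> V \<Longrightarrow> \<phi> i (scale c x) = c * \<phi> i x"
    and s: "\<And>i. i < k \<Longrightarrow> s i \<in> V"
    and dual: "\<And>i j. i < k \<Longrightarrow> j < k \<Longrightarrow> \<phi> i (s j) = (if i = j then 1 else 0)"
  shows "dim {v \<in> V. \<forall>i<k. \<phi> i v = 0} + k = dim V"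
proof -
  have "dim {v \<in> V. \<forall>i<j. \<phi> i v = 0} + j = dim V" if "j \<le> k" for j
    using that
  proof (induction j)
    case 0
    thus ?case by simp
  next
    case (Suc j)
    define U where "U = {v \<in> V. \<forall>i<j. \<phi> i v = 0}"
    have "j < k" using Suc.prems by simp
    have "\<phi> i 0 = 0" if "i < k" for i using scale[OF that s[OF that], of 0] by simp
    hence "subspace U"
      using V(1) add scale \<open>j < k\<close> by (auto simp: U_def subspace_def)
    moreover have "U \<subseteq> span F" using V(3) by (auto simp: U_def)
    moreover have "s j \<in> U" using s dual \<open>j < k\<close> by (auto simp: U_def)
    ultimately have "dim {u \<in> U. \<phi> j u = 0} + 1 = dim U"
      using add scale dual \<open>j < k\<close> by (intro dim_kernel_add_one[OF _ V(2)]) (auto simp: U_def)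
    moreover have "{u \<in> U. \<phi> j u = 0} = {v \<in> V. \<forall>i<Suc j. \<phi> i v = 0}"
      by (auto simp: U_def less_Suc_eq)
    ultimately show ?case using Suc U_def by simp
  qed
  thus ?thesis by simp
qed

end

interpretation pairs: vector_space pair_scale
  by unfold_locales (auto simp: pair_scale_def smult_add_right smult_add_left prod_eq_iff)

definition Hom_pairs :: "int \<Rightarrow> int \<Rightarrow> (complex poly \<times> complex poly) set" where
  "Hom_pairs da db = {(f, g). f \<in> Hom da \<and> g \<in> Hom db}"

definition monomial_pairs :: "int \<Rightarrow> int \<Rightarrow> (complex poly \<times> complex poly) set" where
  "monomial_pairs da db = (\<lambda>i. (monom 1 i, 0)) ` {..nat da} \<union> (\<lambda>i. (0, monom 1 i)) ` {..nat db}"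

lemma subspace_Hom_pairs: "pairs.subspace (Hom_pairs da db)"
  by (auto simp: pairs.subspace_def Hom_pairs_def pair_scale_def Hom_add Hom_smult zero_prod_def)

lemma Hom_pairs_subset_span: "Hom_pairs da db \<subseteq> pairs.span (monomial_pairs da db)"
proof
  fix v assume "v \<in> Hom_pairs da db"
  then obtain f g where v: "v = (f, g)" and "degree f \<le> nat da" "degree g \<le> nat db"
    by (auto simp: Hom_pairs_def dest: degree_le_if_Hom)
  hence "(f, 0) = (\<Sum>i\<le>nat da. pair_scale (coeff f i) (monom 1 i, 0))"
    and "(0, g) = (\<Sum>i\<le>nat db. pair_scale (coeff g i) (0, monom 1 i))"
    by (simp_all add: prod_eq_iff fst_sum snd_sum pair_scale_def smult_monom
        poly_as_sum_of_monoms')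
  hence "(f, 0) \<in> pairs.span (monomial_pairs da db)" "(0, g) \<in> pairs.span (monomial_pairs da db)"
    by (metis (no_types, lifting) pairs.span_sum pairs.span_scale pairs.span_base
        monomial_pairs_def UnI1 UnI2 atMost_iff imageI)+
  hence "(f, 0) + (0, g) \<in> pairs.span (monomial_pairs da db)" by (rule pairs.span_add)
  thus "v \<in> pairs.span (monomial_pairs da db)" by (simp add: v)
qed

definition node_defect ::
  "int \<Rightarrow> int \<Rightarrow> (nat \<Rightarrow> complex \<times> complex) \<Rightarrow> (nat \<Rightarrow> complex \<times> complex) \<Rightarrow> (nat \<Rightarrow> complex)
     \<Rightarrow> nat \<Rightarrow> complex poly \<times> complex poly \<Rightarrow> complex" where
  "node_defect da db P Q lam e v = heval da (fst v) (P e) - lam e * heval db (snd v) (Q e)"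

lemma node_defect_add:
  "node_defect da db P Q lam e (x + y) = node_defect da db P Q lam e x + node_defect da db P Q lam e y"
  by (simp add: node_defect_def heval_add algebra_simps)

lemma node_defect_scale:
  "node_defect da db P Q lam e (pair_scale c x) = c * node_defect da db P Q lam e x"
  by (simp add: node_defect_def pair_scale_def heval_smult algebra_simps)

lemma G5_sections_eq_common_kernel:
  "G5_sections da db P Q lam = {v \<in> Hom_pairs da db. \<forall>e<4. node_defect da db P Q lam e v = 0}"
  by (auto simp: G5_sections_def Hom_pairs_def node_defect_def)

lemma subspace_G5_sections: "pairs.subspace (G5_sections da db P Q lam)"
proof -
  have "node_defect da db P Q lam e 0 = 0" for e by (simp add: node_defect_def)
  thus ?thesis using subspace_Hom_pairs
    by (auto simp: pairs.subspace_def G5_sections_eq_common_kernel node_defect_add node_defect_scale)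
qed

lemma G5_sections_subset_span: "G5_sections da db P Q lam \<subseteq> pairs.span (monomial_pairs da db)"
  using Hom_pairs_subset_span G5_sections_eq_common_kernel by blast

lemma h0_G5_add_four:
  assumes M: "G5_member P Q lam" and high: "3 \<le> da \<or> 3 \<le> db"
  shows "h0_G5 da db P Q lam + 4 = pairs.dim (Hom_pairs da db)"
proof -
  have P: "four_points P" and Q: "four_points Q" and lam: "\<And>e. e < 4 \<Longrightarrow> lam e \<noteq> 0"
    using M by (auto simp: G5_member_def)
  obtain s where s: "\<And>j. j < 4 \<Longrightarrow> s j \<in> Hom_pairs da db"
    and dual: "\<And>i j. i < 4 \<Longrightarrow> j < 4 \<Longrightarrow>
      node_defect da db P Q lam i (s j) = (if i = j then 1 else 0)"
  proof (cases "3 \<le> da")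
    case True
    then obtain t where "\<And>j. j < 4 \<Longrightarrow> t j \<in> Hom da"
      "\<And>i j. i < 4 \<Longrightarrow> j < 4 \<Longrightarrow> heval da (t j) (P i) = (if i = j then 1 else 0)"
      using Hom_dual_sections[OF P] by blast
    thus thesis by (intro that[of "\<lambda>j. (t j, 0)"]) (auto simp: Hom_pairs_def node_defect_def)
  next
    case False
    then obtain t where "\<And>j. j < 4 \<Longrightarrow> t j \<in> Hom db"
      "\<And>i j. i < 4 \<Longrightarrow> j < 4 \<Longrightarrow> heval db (t j) (Q i) = (if i = j then 1 else 0)"
      using Hom_dual_sections[OF Q] high by (metis linorder_not_le)
    thus thesis
      by (intro that[of "\<lambda>j. (0, smult (- 1 / lam j) (t j))"])
         (simp_all del: smult_minus_left add: Hom_pairs_def node_defect_def Hom_smult heval_smult lam)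
  qed
  have "pairs.dim {v \<in> Hom_pairs da db. \<forall>i<4. node_defect da db P Q lam i v = 0} + 4 =
      pairs.dim (Hom_pairs da db)"
    by (rule pairs.dim_common_kernel_add[OF subspace_Hom_pairs _ Hom_pairs_subset_span, where s = s])
       (simp_all add: monomial_pairs_def node_defect_add node_defect_scale s dual)
  thus ?thesis by (simp add: h0_G5_def G5_sections_eq_common_kernel)
qed

lemma h0_G5_eq_0:
  assumes M: "G5_member P Q lam" and "da \<le> 2" "db \<le> 2" "da < 0 \<or> db < 0"
  shows "h0_G5 da db P Q lam = 0"
proof -
  have P: "four_points P" and Q: "four_points Q" and lam: "\<And>e. e < 4 \<Longrightarrow> lam e \<noteq> 0"
    using M by (auto simp: G5_member_def)
  have "G5_sections da db P Q lam \<subseteq> {0}"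
  proof
    fix v assume "v \<in> G5_sections da db P Q lam"
    then obtain f g where v: "v = (f, g)" "f \<in> Hom da" "g \<in> Hom db"
      and glue: "\<forall>e<4. heval da f (P e) = lam e * heval db g (Q e)"
      by (auto simp: G5_sections_def)
    have "f = 0 \<and> g = 0"
    proof (cases "da < 0")
      case True
      hence "f = 0" using v(2) by (simp add: Hom_neg_iff)
      moreover from this have "g = 0"
        using glue lam by (intro Hom_eq_0_if_vanishes_at_four_points[OF Q v(3) \<open>db \<le> 2\<close>]) auto
      ultimately show ?thesis by simp
    next
      case False
      hence "g = 0" using v(3) assms(4) by (simp add: Hom_neg_iff)
      moreover from this have "f = 0"
        using glue by (intro Hom_eq_0_if_vanishes_at_four_points[OF P v(2) \<open>da \<le> 2\<close>]) auto
      ultimately show ?thesis by simp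
    qed
    thus "v \<in> {0}" by (simp add: v zero_prod_def)
  qed
  hence "pairs.dim (G5_sections da db P Q lam) \<le> card {}"
    using pairs.dim_le_card[of _ "{}"] by (simp add: pairs.span_empty)
  thus ?thesis by (simp add: h0_G5_def)
qed

definition integer_nodes :: "nat \<Rightarrow> complex \<times> complex" where
  "integer_nodes e = (of_nat e, 1)"

lemma four_points_integer_nodes: "four_points integer_nodes"
  by (auto simp: four_points_def integer_nodes_def)

lemma G5_sections_integer_nodes_iff:
  assumes "0 \<le> da" "0 \<le> db"
  shows "(f, g) \<in> G5_sections da db integer_nodes integer_nodes lam \<longleftrightarrow>
    degree f \<le> nat da \<and> degree g \<le> nat db \<and>
    (\<forall>e<3. poly f (of_nat e) = lam e * poly g (of_nat e)) \<and> poly f 3 = lam 3 * poly g 3"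
proof -
  have "(\<forall>e<4. R e) \<longleftrightarrow> (\<forall>e<3. R e) \<and> R 3" for R :: "nat \<Rightarrow> bool"
    by (auto simp: less_Suc_eq numeral_eq_Suc)
  thus ?thesis
    using assms by (auto simp: G5_sections_def Hom_iff integer_nodes_def heval_eq_poly)
qed

text \<open>The conditions at the first three nodes force f = g, after which the last one reads
  (\<lambda>_3 - 1) f(3) = 0.\<close>
lemma h0_G5_integer_nodes_jump:
  assumes "0 \<le> da" "da \<le> 2" "0 \<le> db" "db \<le> 2"
  shows "h0_G5 da db integer_nodes integer_nodes (\<lambda>e. if e = 3 then 2 else 1) + 1 =
    h0_G5 da db integer_nodes integer_nodes (\<lambda>_. 1)"
proof -
  define S where "S = G5_sections da db integer_nodes integer_nodes (\<lambda>_. 1)"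
  define \<psi> where "\<psi> v = heval da (fst v) (integer_nodes 3)" for v :: "complex poly \<times> complex poly"
  have \<psi>: "\<psi> (f, g) = poly f 3" if "degree f \<le> nat da" for f g
    using that by (simp add: \<psi>_def integer_nodes_def heval_eq_poly)
  have diagonal: "f = g"
    if "degree f \<le> nat da" "degree g \<le> nat db" "\<forall>e<3. poly f (of_nat e) = poly g (of_nat e)"
    for f g :: "complex poly"
    by (rule poly_eqI_degree[of "of_nat ` {..<3}"]) (use that assms in \<open>auto simp: card_image\<close>)
  have "(f, g) \<in> G5_sections da db integer_nodes integer_nodes (\<lambda>e. if e = 3 then 2 else 1) \<longleftrightarrow>
      (f, g) \<in> S \<and> \<psi> (f, g) = 0" for f g
    using diagonal[of f g] by (auto simp: S_def G5_sections_integer_nodes_iff assms \<psi>)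
  hence "G5_sections da db integer_nodes integer_nodes (\<lambda>e. if e = 3 then 2 else 1) =
      {v \<in> S. \<psi> v = 0}"
    by auto
  moreover have "pairs.dim {v \<in> S. \<psi> v = 0} + 1 = pairs.dim S"
  proof (rule pairs.dim_kernel_add_one[where s = "(1, 1)"])
    show "S \<subseteq> pairs.span (monomial_pairs da db)" unfolding S_def by (rule G5_sections_subset_span)
    show "pairs.subspace S" unfolding S_def by (rule subspace_G5_sections)
    show "\<psi> (x + y) = \<psi> x + \<psi> y" "\<psi> (pair_scale c x) = c * \<psi> x" for x y c
      by (simp_all add: \<psi>_def heval_add pair_scale_def heval_smult)
    show "(1, 1) \<in> S" "\<psi> (1, 1) = 1"
      using assms by (simp_all add: S_def G5_sections_integer_nodes_iff \<psi>)
  qed (simp add: monomial_pairs_def)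
  ultimately show ?thesis by (simp add: h0_G5_def S_def)
qed

theorem mainTheorem12:
  fixes d\<^sub>\<alpha> d\<^sub>\<beta> :: int
  shows "G5_jumping d\<^sub>\<alpha> d\<^sub>\<beta> \<longleftrightarrow> (0 \<le> d\<^sub>\<alpha> \<and> d\<^sub>\<alpha> \<le> 2 \<and> 0 \<le> d\<^sub>\<beta> \<and> d\<^sub>\<beta> \<le> 2)"
proof
  assume "G5_jumping d\<^sub>\<alpha> d\<^sub>\<beta>"
  then obtain P Q lam P' Q' lam' where M: "G5_member P Q lam" "G5_member P' Q' lam'"
    and "h0_G5 d\<^sub>\<alpha> d\<^sub>\<beta> P Q lam \<noteq> h0_G5 d\<^sub>\<alpha> d\<^sub>\<beta> P' Q' lam'"
    unfolding G5_jumping_def by blast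
  moreover have "h0_G5 d\<^sub>\<alpha> d\<^sub>\<beta> P Q lam = h0_G5 d\<^sub>\<alpha> d\<^sub>\<beta> P' Q' lam'"
    if "\<not> (0 \<le> d\<^sub>\<alpha> \<and> d\<^sub>\<alpha> \<le> 2 \<and> 0 \<le> d\<^sub>\<beta> \<and> d\<^sub>\<beta> \<le> 2)"
  proof (cases "3 \<le> d\<^sub>\<alpha> \<or> 3 \<le> d\<^sub>\<beta>")
    case True
    thus ?thesis using h0_G5_add_four[OF M(1) True] h0_G5_add_four[OF M(2) True] by simp
  next
    case False
    hence "d\<^sub>\<alpha> \<le> 2" "d\<^sub>\<beta> \<le> 2" "d\<^sub>\<alpha> < 0 \<or> d\<^sub>\<beta> < 0" using that by auto
    thus ?thesis using h0_G5_eq_0[OF M(1)] h0_G5_eq_0[OF M(2)] by simp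
  qed
  ultimately show "0 \<le> d\<^sub>\<alpha> \<and> d\<^sub>\<alpha> \<le> 2 \<and> 0 \<le> d\<^sub>\<beta> \<and> d\<^sub>\<beta> \<le> 2" by blast
next
  assume "0 \<le> d\<^sub>\<alpha> \<and> d\<^sub>\<alpha> \<le> 2 \<and> 0 \<le> d\<^sub>\<beta> \<and> d\<^sub>\<beta> \<le> 2"
  hence "h0_G5 d\<^sub>\<alpha> d\<^sub>\<beta> integer_nodes integer_nodes (\<lambda>e. if e = 3 then 2 else 1) \<noteq>
      h0_G5 d\<^sub>\<alpha> d\<^sub>\<beta> integer_nodes integer_nodes (\<lambda>_. 1)"
    using h0_G5_integer_nodes_jump[of d\<^sub>\<alpha> d\<^sub>\<beta>] by simp
  moreover have "G5_member integer_nodes integer_nodes (\<lambda>e. if e = 3 then 2 else 1)"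
    "G5_member integer_nodes integer_nodes (\<lambda>_. 1)"
    by (simp_all add: G5_member_def four_points_integer_nodes)
  ultimately show "G5_jumping d\<^sub>\<alpha> d\<^sub>\<beta>" unfolding G5_jumping_def by blast
qed

end
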